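(* Assume that every increasing sequence of positive integers $x_1<x_2<x_3<\cdots$ with bounded gaps (i.e. there is a constant $K$ with $x_{n+1}-x_n\le K$ for all $n\ge1$) contains a double 3-term arithmetic progression. Then for every positive integer $r$ and every coloring of $\mathbb{N}$ with $r$ colors, there is a color class $A=\{a_1<a_2<a_3<\cdots\}$ (finite or infinite, listed in increasing order) that contains a double 3-term arithmetic progression, i.e. there are indices $i<j<k$ with $i+k=2j$ and $a_i+a_k=2a_j$. *)

theory Defs
  imports Main "HOL-Library.Infinite_Set"
begin

definition double3AP_seq :: "(nat \<Rightarrow> nat) \<Rightarrow> bool" where
  "double3AP_seq x \<longleftrightarrow>
     (\<exists>i j k. i < j \<and> j < k \<and> i + k = 2 * j \<and> x i + x k = 2 * x j)"

definition elem_at :: "nat set \<Rightarrow> nat \<Rightarrow> nat" where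
  "elem_at A i = (if finite A then sorted_list_of_set A ! i else enumerate A i)"

definition valid_idx :: "nat set \<Rightarrow> nat \<Rightarrow> bool" where
  "valid_idx A i \<longleftrightarrow> infinite A \<or> i < card A"

definition double3AP_set :: "nat set \<Rightarrow> bool" where
  "double3AP_set A \<longleftrightarrow>
     (\<exists>i j k. i < j \<and> j < k \<and> valid_idx A k \<and> i + k = 2 * j \<and>
              elem_at A i + elem_at A k = 2 * elem_at A j)"

end

theory Submission
  imports Defs
begin

(*
  The hypothesis is about single infinite sequences with bounded gaps; a
  compactness (Koenig) argument turns it into a uniform finite statement: for every gap
  bound K there is N such that every run x 0 < x 1 < ... < x N with gaps at most K
  already contains a double 3-term progression with indices at most N.

  Such runs occur in every piecewise syndetic set of naturals, i.e. a set A with a gap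
  bound K such that arbitrarily long intervals exist in which every window of length K
  meets A.  Piecewise syndeticity is partition regular (Brown's lemma): if a finite
  union is piecewise syndetic, so is one of its members.  Since the positive integers
  are piecewise syndetic, one colour class is piecewise syndetic, and its increasing
  enumeration contains a run of N+1 consecutive elements with gaps at most K, hence a
  double 3-term progression.
*)

definition ap3_upto :: "(nat \<Rightarrow> nat) \<Rightarrow> nat \<Rightarrow> bool" where
  "ap3_upto x N \<longleftrightarrow>
     (\<exists>i j k. i < j \<and> j < k \<and> k \<le> N \<and> i + k = 2 * j \<and> x i + x k = 2 * x j)"

lemma ap3_upto_mono: "ap3_upto x M \<Longrightarrow> M \<le> N \<Longrightarrow> ap3_upto x N"
  unfolding ap3_upto_def by (meson order_trans)

lemma ap3_upto_cong: "(\<And>t. t \<le> N \<Longrightarrow> x t = y t) \<Longrightarrow> ap3_upto x N \<longleftrightarrow> ap3_upto y N"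
  unfolding ap3_upto_def by (smt (verit) less_imp_le_nat order_trans)

lemma ap3_upto_shift: "ap3_upto (\<lambda>t. c + x t) N \<longleftrightarrow> ap3_upto x N"
  unfolding ap3_upto_def by auto

lemma double3AP_seq_imp_ap3_upto: "double3AP_seq x \<Longrightarrow> \<exists>N. ap3_upto x N"
  unfolding double3AP_seq_def ap3_upto_def by blast

section \<open>Compactness for sequences with values in a finite set\<close>

definition extendable ::
    "'a set \<Rightarrow> (nat \<Rightarrow> (nat \<Rightarrow> 'a) \<Rightarrow> bool) \<Rightarrow> (nat \<Rightarrow> 'a) \<Rightarrow> nat \<Rightarrow> bool" where
  "extendable S Q d n \<longleftrightarrow> (\<forall>N. \<exists>e. (\<forall>u<N. e u \<in> S) \<and> (\<forall>u<n. e u = d u) \<and> Q N e)"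

text \<open>Pigeonhole step of Koenig's lemma: an extendable prefix has an extendable one-step
  continuation, because failure for every one of the finitely many choices would be
  witnessed by one common length.\<close>
lemma extendable_step:
  assumes S: "finite S"
    and Q_mono: "\<And>M N e. Q N e \<Longrightarrow> M \<le> N \<Longrightarrow> Q M e"
    and ext: "extendable S Q d n"
  shows "\<exists>g. g \<in> S \<and> extendable S Q (d(n := g)) (Suc n)"
proof (rule ccontr)
  assume "\<not> ?thesis"
  then have "\<forall>g\<in>S. \<exists>N. \<not> (\<exists>e. (\<forall>u<N. e u \<in> S) \<and> (\<forall>u<Suc n. e u = (d(n := g)) u) \<and> Q N e)"
    unfolding extendable_def by blast
  then obtain Nf where Nf: "\<forall>g\<in>S.
      \<not> (\<exists>e. (\<forall>u<Nf g. e u \<in> S) \<and> (\<forall>u<Suc n. e u = (d(n := g)) u) \<and> Q (Nf g) e)"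
    by metis
  define M where "M = Suc n + (\<Sum>g\<in>S. Nf g)"
  from ext obtain e where e: "\<forall>u<M. e u \<in> S" "\<forall>u<n. e u = d u" "Q M e"
    unfolding extendable_def by blast
  have g: "e n \<in> S" using e(1) by (simp add: M_def)
  have "Nf (e n) \<le> M"
    unfolding M_def using member_le_sum[OF g _ S, of Nf] by simp
  then have "\<forall>u<Nf (e n). e u \<in> S" and "Q (Nf (e n)) e"
    using e(1,3) Q_mono by auto
  moreover have "\<forall>u<Suc n. e u = (d(n := e n)) u"
    using e(2) by (simp add: less_Suc_eq)
  ultimately show False using Nf g by blast
qed

lemma finite_choice_compactness:
  fixes Q :: "nat \<Rightarrow> (nat \<Rightarrow> 'a) \<Rightarrow> bool"
  assumes S: "finite S"
    and Q_local: "\<And>N e e'. (\<forall>u<N. e u = e' u) \<Longrightarrow> Q N e \<Longrightarrow> Q N e'"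
    and Q_mono: "\<And>M N e. Q N e \<Longrightarrow> M \<le> N \<Longrightarrow> Q M e"
    and witnesses: "\<And>N. \<exists>e. (\<forall>u<N. e u \<in> S) \<and> Q N e"
  shows "\<exists>e. (\<forall>u. e u \<in> S) \<and> (\<forall>N. Q N e)"
proof -
  have step: "\<exists>g. g \<in> S \<and> extendable S Q (d(n := g)) (Suc n)"
    if "extendable S Q d n" for d n
    using extendable_step[OF S _ that] Q_mono by blast
  define pick where
    "pick d n = (SOME g. g \<in> S \<and> extendable S Q (d(n := g)) (Suc n))" for d n
  define D where "D = rec_nat (\<lambda>_. undefined) (\<lambda>n d. d(n := pick d n))"
  have D_Suc: "D (Suc n) = (D n)(n := pick (D n) n)" for n
    unfolding D_def by simp
  have D_extendable: "extendable S Q (D n) n" for n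
  proof (induction n)
    case 0
    show ?case using witnesses unfolding extendable_def by simp
  next
    case (Suc n)
    from someI_ex[OF step[OF Suc.IH]] show ?case
      unfolding D_Suc pick_def by blast
  qed
  have D_in_S: "D (Suc u) u \<in> S" for u
    using someI_ex[OF step[OF D_extendable[of u]]]
    unfolding D_Suc pick_def by simp
  have D_stable: "u < m \<Longrightarrow> D m u = D (Suc u) u" for u m
    by (induction m) (auto simp: D_Suc less_Suc_eq)
  define E where "E u = D (Suc u) u" for u
  have "Q N E" for N
  proof -
    from D_extendable[of "Suc N"] obtain e
      where "\<forall>u<Suc N. e u = D (Suc N) u" "Q N e"
      unfolding extendable_def by blast
    moreover have "\<forall>u<N. D (Suc N) u = E u"
      unfolding E_def using D_stable[of _ "Suc N"] by simp
    ultimately show ?thesis using Q_local[of N e E] by simp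
  qed
  moreover have "E u \<in> S" for u
    unfolding E_def by (rule D_in_S)
  ultimately show ?thesis by blast
qed

section \<open>The uniform finite form of the hypothesis\<close>

text \<open>Compactness applied to gap sequences with gaps in {1..K}: the hypothesis on infinite
  sequences yields a single N that works for all their partial-sum sequences.\<close>
lemma uniform_ap3_gap_sequences:
  assumes hyp: "\<forall>x :: nat \<Rightarrow> nat.
                  strict_mono x \<and> (\<forall>n. 0 < x n) \<and> (\<exists>K. \<forall>n. x (Suc n) - x n \<le> K)
                  \<longrightarrow> double3AP_seq x"
  shows "\<exists>N. \<forall>e. (\<forall>u<N. e u \<in> {1..K}) \<longrightarrow> ap3_upto (\<lambda>t. 1 + (\<Sum>u<t. e u)) N"
proof (rule ccontr)
  define Q where "Q N e \<longleftrightarrow> \<not> ap3_upto (\<lambda>t. 1 + (\<Sum>u<t. e u)) N" for N e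
  assume "\<not> ?thesis"
  then have witnesses: "\<exists>e. (\<forall>u<N. e u \<in> {1..K}) \<and> Q N e" for N
    unfolding Q_def by blast
  have Q_local: "Q N e'" if "\<forall>u<N. e u = e' u" "Q N e" for N e e'
  proof -
    have "(\<Sum>u<t. e u) = (\<Sum>u<t. e' u)" if "t \<le> N" for t
      using \<open>\<forall>u<N. e u = e' u\<close> that by (intro sum.cong) auto
    then have "ap3_upto (\<lambda>t. 1 + (\<Sum>u<t. e u)) N \<longleftrightarrow> ap3_upto (\<lambda>t. 1 + (\<Sum>u<t. e' u)) N"
      by (intro ap3_upto_cong) simp
    then show ?thesis using \<open>Q N e\<close> unfolding Q_def by simp
  qed
  have Q_mono: "Q M e" if "Q N e" "M \<le> N" for M N e
    using that ap3_upto_mono unfolding Q_def by blast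
  obtain e where e: "\<forall>u. e u \<in> {1..K}" "\<forall>N. Q N e"
    using finite_choice_compactness[of "{1..K}" Q] Q_local Q_mono witnesses by blast
  define x where "x t = 1 + (\<Sum>u<t. e u)" for t
  have x_Suc: "x (Suc n) = x n + e n" for n
    unfolding x_def by simp
  have "strict_mono x"
    unfolding strict_mono_Suc_iff using x_Suc e(1) by (simp add: Suc_le_eq)
  moreover have "\<forall>n. 0 < x n" and "\<forall>n. x (Suc n) - x n \<le> K"
    using x_Suc e(1) by (auto simp: x_def)
  ultimately obtain N where "ap3_upto x N"
    using hyp double3AP_seq_imp_ap3_upto by blast
  then show False using e(2) unfolding Q_def x_def by simp
qed

text \<open>The same statement for arbitrary runs x 0 < ... < x N with gaps at most K: the run is
  a translate of the partial sums of its gap sequence.\<close>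
lemma uniform_ap3_bounded_gaps:
  assumes hyp: "\<forall>x :: nat \<Rightarrow> nat.
                  strict_mono x \<and> (\<forall>n. 0 < x n) \<and> (\<exists>K. \<forall>n. x (Suc n) - x n \<le> K)
                  \<longrightarrow> double3AP_seq x"
  shows "\<exists>N. \<forall>x. (\<forall>u<N. x u < x (Suc u) \<and> x (Suc u) \<le> x u + K) \<longrightarrow> ap3_upto x N"
proof -
  obtain N where N: "\<And>e. \<forall>u<N. e u \<in> {1..K} \<Longrightarrow> ap3_upto (\<lambda>t. 1 + (\<Sum>u<t. e u)) N"
    using uniform_ap3_gap_sequences[OF hyp] by blast
  have "ap3_upto x N" if gaps: "\<forall>u<N. x u < x (Suc u) \<and> x (Suc u) \<le> x u + K" for x
  proof -
    define e where "e u = x (Suc u) - x u" for u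
    have sums: "t \<le> N \<Longrightarrow> 1 + x t = x 0 + (1 + (\<Sum>u<t. e u))" for t
    proof (induction t)
      case (Suc t)
      have "x t < x (Suc t)" using gaps Suc.prems by simp
      then have "x (Suc t) = x t + e t" unfolding e_def by simp
      with Suc show ?case by simp
    qed simp
    have "ap3_upto (\<lambda>t. 1 + (\<Sum>u<t. e u)) N"
      using gaps by (intro N) (auto simp: e_def)
    then have "ap3_upto (\<lambda>t. x 0 + (1 + (\<Sum>u<t. e u))) N"
      by (simp only: ap3_upto_shift)
    moreover have "ap3_upto (\<lambda>t. x 0 + (1 + (\<Sum>u<t. e u))) N \<longleftrightarrow> ap3_upto (\<lambda>t. 1 + x t) N"
      by (intro ap3_upto_cong sums[symmetric])
    ultimately have "ap3_upto (\<lambda>t. 1 + x t) N"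
      by simp
    then show ?thesis by (simp only: ap3_upto_shift)
  qed
  then show ?thesis by blast
qed

section \<open>Piecewise syndetic sets\<close>

definition syndetic_stretches :: "nat set \<Rightarrow> nat \<Rightarrow> bool" where
  "syndetic_stretches A K \<longleftrightarrow>
     (\<forall>L. \<exists>s. \<forall>t. s \<le> t \<and> t + K \<le> s + L \<longrightarrow> (\<exists>b\<in>A. t \<le> b \<and> b < t + K))"

definition piecewise_syndetic :: "nat set \<Rightarrow> bool" where
  "piecewise_syndetic A \<longleftrightarrow> (\<exists>K. syndetic_stretches A K)"

lemma piecewise_syndetic_positive: "piecewise_syndetic {n. 0 < n}"
proof -
  have "\<exists>b\<in>{n. 0 < n}. t \<le> b \<and> b < t + 1" if "1 \<le> t" for t :: nat
    using that by (intro bexI[of _ t]) auto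
  then have "syndetic_stretches {n. 0 < n} 1"
    unfolding syndetic_stretches_def by (intro allI exI[of _ 1]) auto
  then show ?thesis unfolding piecewise_syndetic_def by blast
qed

lemma not_piecewise_syndetic_empty: "\<not> piecewise_syndetic {}"
  unfolding piecewise_syndetic_def syndetic_stretches_def by (metis empty_iff order_refl)

text \<open>If B is not piecewise syndetic, every interval of some length L
  contains a window of length K free of B; inside a stretch where A \<union> B is K-syndetic
  such windows are hit by A, so A has syndetic stretches with gap bound L.\<close>
lemma piecewise_syndetic_Un:
  assumes "piecewise_syndetic (A \<union> B)"
  shows "piecewise_syndetic A \<or> piecewise_syndetic B"
proof (rule disjCI)
  assume "\<not> piecewise_syndetic B"
  obtain K where K: "syndetic_stretches (A \<union> B) K"
    using assms unfolding piecewise_syndetic_def by blast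
  with \<open>\<not> piecewise_syndetic B\<close> have "\<not> syndetic_stretches B K"
    unfolding piecewise_syndetic_def by blast
  then obtain L where L:
    "\<And>s. \<exists>t. s \<le> t \<and> t + K \<le> s + L \<and> (\<forall>b\<in>B. \<not> (t \<le> b \<and> b < t + K))"
    unfolding syndetic_stretches_def by (meson not_le)
  have "syndetic_stretches A L"
    unfolding syndetic_stretches_def
  proof
    fix L'
    obtain s where s: "\<And>t. s \<le> t \<Longrightarrow> t + K \<le> s + L' \<Longrightarrow> \<exists>b\<in>A \<union> B. t \<le> b \<and> b < t + K"
      using K unfolding syndetic_stretches_def by blast
    have "\<exists>b\<in>A. t \<le> b \<and> b < t + L" if t: "s \<le> t" "t + L \<le> s + L'" for t
    proof -
      obtain t' where t': "t \<le> t'" "t' + K \<le> t + L" "\<forall>b\<in>B. \<not> (t' \<le> b \<and> b < t' + K)"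
        using L by blast
      have "s \<le> t'" "t' + K \<le> s + L'" using t t' by linarith+
      then obtain b where b: "b \<in> A \<union> B" "t' \<le> b" "b < t' + K"
        using s by blast
      then have "b \<in> A" using t'(3) by blast
      moreover have "t \<le> b" "b < t + L" using b t' by linarith+
      ultimately show ?thesis by blast
    qed
    then show "\<exists>s. \<forall>t. s \<le> t \<and> t + L \<le> s + L' \<longrightarrow> (\<exists>b\<in>A. t \<le> b \<and> b < t + L)"
      by blast
  qed
  then show "piecewise_syndetic A" unfolding piecewise_syndetic_def by blast
qed

lemma piecewise_syndetic_UN:
  assumes "finite I" "piecewise_syndetic (\<Union>i\<in>I. A i)"
  shows "\<exists>i\<in>I. piecewise_syndetic (A i)"
  using assms
proof (induction I rule: finite_induct)
  case empty
  then show ?case using not_piecewise_syndetic_empty by simp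
next
  case (insert i I)
  then show ?case using piecewise_syndetic_Un[of "A i" "\<Union>i\<in>I. A i"] by auto
qed

lemma syndetic_stretches_infinite:
  assumes "syndetic_stretches A K"
  shows "infinite A"
  unfolding infinite_nat_iff_unbounded_le
proof
  fix m
  obtain s where s: "\<And>t. s \<le> t \<Longrightarrow> t + K \<le> s + (m + K) \<Longrightarrow> \<exists>b\<in>A. t \<le> b \<and> b < t + K"
    using assms unfolding syndetic_stretches_def by blast
  have "\<exists>b\<in>A. s + m \<le> b \<and> b < s + m + K"
    by (rule s) simp_all
  then show "\<exists>n\<ge>m. n \<in> A" by (meson le_add2 order_trans)
qed

lemma syndetic_stretches_run:
  assumes "syndetic_stretches A K"
  shows "\<exists>m. \<forall>u<N. enumerate A (Suc (m + u)) \<le> enumerate A (m + u) + K"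
proof -
  have inf: "infinite A" using syndetic_stretches_infinite[OF assms] .
  obtain s where s: "\<And>t. s \<le> t \<Longrightarrow> t + K \<le> s + (N + 2) * (K + 1) \<Longrightarrow>
      \<exists>b\<in>A. t \<le> b \<and> b < t + K"
    using assms unfolding syndetic_stretches_def by blast
  obtain a where a: "a \<in> A" "s \<le> a" "a < s + K"
    using s[of s] by (force simp: algebra_simps)
  obtain m where m: "enumerate A m = a"
    using enumerate_Ex[OF inf a(1)] by blast
  define v where "v t = enumerate A (m + t)" for t
  text \<open>Inside the stretch, the successor of v t lies in the next window of length K.\<close>
  have step: "v (Suc t) \<le> v t + K" if "v t \<le> a + t * K" "t < N" for t
  proof -
    have "t * K \<le> N * K" using \<open>t < N\<close> by simp
    moreover have "(N + 2) * (K + 1) = N * K + N + 2 * K + 2"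
      by (simp add: algebra_simps)
    ultimately have "v t + 1 + K \<le> s + (N + 2) * (K + 1)"
      using that a(3) by linarith
    moreover have "s \<le> v t + 1"
      using a(2) enumerate_mono_le_iff[OF inf, of m "m + t"] by (simp add: v_def m)
    ultimately obtain b where b: "b \<in> A" "v t < b" "b \<le> v t + K"
      using s[of "v t + 1"] by force
    obtain p where p: "enumerate A p = b" using enumerate_Ex[OF inf b(1)] by blast
    then have "enumerate A (m + t) < enumerate A p" using b(2) by (simp add: v_def)
    then have "m + t < p" using inf by simp
    then have "v (Suc t) \<le> b"
      using enumerate_mono_le_iff[OF inf, of "Suc (m + t)" p] by (simp add: v_def p)
    with b(3) show ?thesis by simp
  qed
  have bound: "t \<le> N \<Longrightarrow> v t \<le> a + t * K" for t
  proof (induction t)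
    case (Suc t)
    then have "v (Suc t) \<le> v t + K" by (intro step) simp_all
    with Suc show ?case by simp
  qed (simp add: v_def m)
  have "\<forall>u<N. v (Suc u) \<le> v u + K"
    using step bound by simp
  then show ?thesis by (intro exI[of _ m]) (simp add: v_def)
qed

lemma piecewise_syndetic_double3AP:
  assumes hyp: "\<forall>x :: nat \<Rightarrow> nat.
                  strict_mono x \<and> (\<forall>n. 0 < x n) \<and> (\<exists>K. \<forall>n. x (Suc n) - x n \<le> K)
                  \<longrightarrow> double3AP_seq x"
    and "piecewise_syndetic A"
  shows "double3AP_set A"
proof -
  obtain K where K: "syndetic_stretches A K"
    using assms(2) unfolding piecewise_syndetic_def by blast
  have inf: "infinite A" using syndetic_stretches_infinite[OF K] .
  obtain N where N: "\<And>x. \<forall>u<N. x u < x (Suc u) \<and> x (Suc u) \<le> x u + K \<Longrightarrow> ap3_upto x N"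
    using uniform_ap3_bounded_gaps[OF hyp] by blast
  obtain m where m: "\<forall>u<N. enumerate A (Suc (m + u)) \<le> enumerate A (m + u) + K"
    using syndetic_stretches_run[OF K] by blast
  have "ap3_upto (\<lambda>t. enumerate A (m + t)) N"
    using m enumerate_step[OF inf] by (intro N) simp
  then obtain i j k where "i < j" "j < k" "i + k = 2 * j"
      "enumerate A (m + i) + enumerate A (m + k) = 2 * enumerate A (m + j)"
    unfolding ap3_upto_def by blast
  then show ?thesis
    unfolding double3AP_set_def elem_at_def valid_idx_def using inf
    by (intro exI[of _ "m + i"] exI[of _ "m + j"] exI[of _ "m + k"]) simp
qed

text \<open>The colour classes cover the positive integers, which are piecewise syndetic, so
  one of them is piecewise syndetic and hence contains a double 3-AP.\<close>
theorem proposition1: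
  assumes hyp: "\<forall>x :: nat \<Rightarrow> nat.
                  strict_mono x \<and> (\<forall>n. 0 < x n) \<and> (\<exists>K. \<forall>n. x (Suc n) - x n \<le> K)
                  \<longrightarrow> double3AP_seq x"
    and r: "0 < r"
    and col: "\<forall>n. 0 < n \<longrightarrow> c n < (r :: nat)"
  shows "\<exists>q < r. double3AP_set {n. 0 < n \<and> c n = q}"
proof -
  have "{n. 0 < n} = (\<Union>q\<in>{..<r}. {n. 0 < n \<and> c n = q})"
    using col by auto
  then obtain q where "q < r" "piecewise_syndetic {n. 0 < n \<and> c n = q}"
    using piecewise_syndetic_UN[of "{..<r}"] piecewise_syndetic_positive by force
  then show ?thesis using piecewise_syndetic_double3AP[OF hyp] by blast
qed

end
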